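(* Let $(S,\mathfrak{n})$ be a Noetherian local ring, $x_1,\dots,x_r\in S$, and $\Gamma$ a set of monomials in $P=k[T_1,\dots,T_r]$. Let $i_1<i_2$ be positive integers and let $i_3$ be either an integer with $i_3>i_2$ or $i_3=\infty$ (in which case $S$ is assumed complete). Consider: (1) $x_1,\dots,x_r$ is $\Gamma$-expandable from degree $i_1$ to $i_2$; (2) $x_1,\dots,x_r$ is $\Gamma$-expandable from degree $i_1$ to $i_3$; (3) $x_1,\dots,x_r$ is $\Gamma$-expandable from degree $i_2$ to $i_3$. Then any two of (1), (2), (3) imply the third.
   Context: Let $I=(x_1,\dots,x_r)$ and set $I^\infty=0$. For $u=T_1^{a_1}\cdots T_r^{a_r}$ let $u(x)=x_1^{a_1}\cdots x_r^{a_r}$; $\Gamma_k$ is the set of monomials of degree $k$ in $\Gamma$. A lifting is a map $\sigma:S/I\to S$ with $\sigma(0)=0$ and $\pi\circ\sigma=\mathrm{id}_{S/I}$, $\pi:S\to S/I$ the projection. For $0\le i<j<\infty$, $x_1,\dots,x_r$ is $\Gamma$-expandable from degree $i$ to $j$ if for every lifting $\sigma$, every $f\in I^i$ has a unique representation $f\equiv\sum_{u\in\Gamma_k,\,i\le k\le j-1}f_uu(x)\pmod{I^j}$ with all $f_u\in\sigma(S/I)$ (uniqueness of the family $(f_u)$). If $S$ is complete, $x_1,\dots,x_r$ is $\Gamma$-expandable from degree $i$ to $\infty$ if for every lifting $\sigma$ every $f\in I^i$ has a unique representation $f=\sum_{u\in\Gamma_k,\,k\ge i}f_uu(x)$ (convergent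 sum) with all $f_u\in\sigma(S/I)$. *)

theory Defs
  imports "HOL-Library.Extended_Nat"
begin

definition is_ideal :: "'a::comm_ring_1 set \<Rightarrow> bool" where
  "is_ideal J \<longleftrightarrow> 0 \<in> J \<and> (\<forall>a\<in>J. \<forall>b\<in>J. a + b \<in> J) \<and> (\<forall>s. \<forall>a\<in>J. s * a \<in> J)"

definition ideal_gen :: "'a::comm_ring_1 set \<Rightarrow> 'a set" where
  "ideal_gen X = {y. \<exists>F c. finite F \<and> F \<subseteq> X \<and> y = (\<Sum>g\<in>F. c g * g)}"

definition ideal_pow :: "'a::comm_ring_1 set \<Rightarrow> nat \<Rightarrow> 'a set" where
  "ideal_pow J k = ideal_gen {prod_list l | l. length l = k \<and> set l \<subseteq> J}"

definition maximal_ideal :: "'a::comm_ring_1 set \<Rightarrow> bool" where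
  "maximal_ideal M \<longleftrightarrow> is_ideal M \<and> M \<noteq> UNIV \<and>
     (\<forall>J. is_ideal J \<and> M \<subseteq> J \<longrightarrow> J = M \<or> J = UNIV)"

definition noetherian_ring :: "'a::comm_ring_1 itself \<Rightarrow> bool" where
  "noetherian_ring _ \<longleftrightarrow> (\<forall>J::'a set. is_ideal J \<longrightarrow> (\<exists>X. finite X \<and> J = ideal_gen X))"

definition local_ring :: "'a::comm_ring_1 itself \<Rightarrow> bool" where
  "local_ring _ \<longleftrightarrow> (\<exists>!M::'a set. maximal_ideal M)"

definition adic_complete :: "'a::comm_ring_1 set \<Rightarrow> bool" where
  "adic_complete M \<longleftrightarrow> (\<forall>s::nat \<Rightarrow> 'a.
      (\<forall>n. \<exists>N. \<forall>p\<ge>N. \<forall>q\<ge>N. s p - s q \<in> ideal_pow M n) \<longrightarrow>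
      (\<exists>L. \<forall>n. \<exists>N. \<forall>p\<ge>N. s p - L \<in> ideal_pow M n))"

definition monomials :: "nat \<Rightarrow> (nat \<Rightarrow> nat) set" where
  "monomials r = {a. \<forall>i\<ge>r. a i = 0}"

definition mdeg :: "nat \<Rightarrow> (nat \<Rightarrow> nat) \<Rightarrow> nat" where
  "mdeg r a = (\<Sum>i<r. a i)"

definition meval :: "nat \<Rightarrow> (nat \<Rightarrow> 'a::comm_ring_1) \<Rightarrow> (nat \<Rightarrow> nat) \<Rightarrow> 'a" where
  "meval r x a = (\<Prod>i<r. x i ^ a i)"

definition deg_part :: "nat \<Rightarrow> (nat \<Rightarrow> nat) set \<Rightarrow> nat \<Rightarrow> (nat \<Rightarrow> nat) set" where
  "deg_part r \<Gamma> k = {u\<in>\<Gamma>. mdeg r u = k}"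

text \<open>A map S/I -> S is modelled as a map S -> S constant on cosets of I;
  sigma(0) = 0 and pi o sigma = id.  Its image is sigma(S/I).\<close>
definition lifting :: "'a::comm_ring_1 set \<Rightarrow> ('a \<Rightarrow> 'a) \<Rightarrow> bool" where
  "lifting I \<sigma> \<longleftrightarrow> (\<forall>a b. a - b \<in> I \<longrightarrow> \<sigma> a = \<sigma> b) \<and> \<sigma> 0 = 0 \<and> (\<forall>a. \<sigma> a - a \<in> I)"

definition gen_ideal :: "nat \<Rightarrow> (nat \<Rightarrow> 'a::comm_ring_1) \<Rightarrow> 'a set" where
  "gen_ideal r x = ideal_gen (x ` {..<r})"

definition rep_fin ::
  "nat \<Rightarrow> (nat \<Rightarrow> 'a::comm_ring_1) \<Rightarrow> (nat \<Rightarrow> nat) set \<Rightarrow> nat \<Rightarrow> nat \<Rightarrow> ('a \<Rightarrow> 'a) \<Rightarrow> 'a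
   \<Rightarrow> ((nat \<Rightarrow> nat) \<Rightarrow> 'a) \<Rightarrow> bool" where
  "rep_fin r x \<Gamma> i j \<sigma> f c \<longleftrightarrow>
     (\<forall>u\<in>\<Gamma>. i \<le> mdeg r u \<and> mdeg r u < j \<longrightarrow> c u \<in> range \<sigma>) \<and>
     f - (\<Sum>k\<in>{i..<j}. \<Sum>u\<in>deg_part r \<Gamma> k. c u * meval r x u) \<in> ideal_pow (gen_ideal r x) j"

definition rep_inf ::
  "'a::comm_ring_1 set \<Rightarrow> nat \<Rightarrow> (nat \<Rightarrow> 'a) \<Rightarrow> (nat \<Rightarrow> nat) set \<Rightarrow> nat \<Rightarrow> ('a \<Rightarrow> 'a) \<Rightarrow> 'a
   \<Rightarrow> ((nat \<Rightarrow> nat) \<Rightarrow> 'a) \<Rightarrow> bool" where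
  "rep_inf M r x \<Gamma> i \<sigma> f c \<longleftrightarrow>
     (\<forall>u\<in>\<Gamma>. i \<le> mdeg r u \<longrightarrow> c u \<in> range \<sigma>) \<and>
     (\<forall>n. \<exists>N. \<forall>K\<ge>N.
        f - (\<Sum>k\<in>{i..K}. \<Sum>u\<in>deg_part r \<Gamma> k. c u * meval r x u) \<in> ideal_pow M n)"

definition expandable ::
  "'a::comm_ring_1 set \<Rightarrow> nat \<Rightarrow> (nat \<Rightarrow> 'a) \<Rightarrow> (nat \<Rightarrow> nat) set \<Rightarrow> nat \<Rightarrow> enat \<Rightarrow> bool" where
  "expandable M r x \<Gamma> i j \<longleftrightarrow>
     (\<forall>\<sigma>. lifting (gen_ideal r x) \<sigma> \<longrightarrow>
       (\<forall>f \<in> ideal_pow (gen_ideal r x) i.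
         (case j of
            enat j' \<Rightarrow> \<exists>c. rep_fin r x \<Gamma> i j' \<sigma> f c \<and>
                 (\<forall>c'. rep_fin r x \<Gamma> i j' \<sigma> f c' \<longrightarrow>
                    (\<forall>u\<in>\<Gamma>. i \<le> mdeg r u \<and> mdeg r u < j' \<longrightarrow> c' u = c u))
          | \<infinity> \<Rightarrow> \<exists>c. rep_inf M r x \<Gamma> i \<sigma> f c \<and>
                 (\<forall>c'. rep_inf M r x \<Gamma> i \<sigma> f c' \<longrightarrow>
                    (\<forall>u\<in>\<Gamma>. i \<le> mdeg r u \<longrightarrow> c' u = c u)))))"

end

(* Truncating an expansion of f from degree i1 to i3 at degree i2 gives an expansion from i1
   to i2, and its tail is an expansion from i2 to i3 of the remainder f - (terms of degree < i2);
   conversely two such expansions glue to one from i1 to i3.  Uniqueness of coefficients passes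
   through truncation and gluing, which yields all three implications.  The only step that is not
   formal is truncating a convergent expansion (i3 = infinity): the remainder is then merely an
   adic limit of elements of I^i2, and Krull's intersection theorem, in the form "every ideal of a
   Noetherian local ring is closed in the adic topology", puts it into I^i2. *)

theory Submission
  imports Defs
begin

section \<open>Ideals and their powers\<close>

lemma is_ideal_zero: "is_ideal J \<Longrightarrow> 0 \<in> J"
  by (simp add: is_ideal_def)

lemma is_ideal_add: "is_ideal J \<Longrightarrow> a \<in> J \<Longrightarrow> b \<in> J \<Longrightarrow> a + b \<in> J"
  by (simp add: is_ideal_def)

lemma is_ideal_mult_left: "is_ideal J \<Longrightarrow> a \<in> J \<Longrightarrow> s * a \<in> J"
  by (simp add: is_ideal_def)

lemma is_ideal_mult_right: "is_ideal J \<Longrightarrow> a \<in> J \<Longrightarrow> a * s \<in> J"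
  by (metis is_ideal_mult_left mult.commute)

lemma is_ideal_dvd: "is_ideal J \<Longrightarrow> a \<in> J \<Longrightarrow> a dvd b \<Longrightarrow> b \<in> J"
  by (auto elim!: dvdE intro: is_ideal_mult_right)

lemma is_ideal_diff: "is_ideal J \<Longrightarrow> a \<in> J \<Longrightarrow> b \<in> J \<Longrightarrow> a - b \<in> J"
  using is_ideal_add[of J a "-1 * b"] is_ideal_mult_left[of J b "-1"] by simp

lemma is_ideal_sum: "is_ideal J \<Longrightarrow> (\<And>a. a \<in> A \<Longrightarrow> f a \<in> J) \<Longrightarrow> sum f A \<in> J"
  by (induction A rule: infinite_finite_induct) (auto intro: is_ideal_zero is_ideal_add)

lemma is_ideal_UNIV_if_one: "is_ideal J \<Longrightarrow> 1 \<in> J \<Longrightarrow> J = UNIV"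
  using is_ideal_mult_left[of J 1] by auto

lemma is_ideal_ideal_gen: "is_ideal (ideal_gen X)"
proof -
  have extend: "(\<Sum>g\<in>F. (if g \<in> F1 then c g else 0) * g) = (\<Sum>g\<in>F1. c g * g)"
    if "finite F" "F1 \<subseteq> F" for F F1 and c :: "'a \<Rightarrow> 'a"
    using that sum.mono_neutral_right[of F F1 "\<lambda>g. (if g \<in> F1 then c g else 0) * g"] by simp
  have "a + b \<in> ideal_gen X" if ab: "a \<in> ideal_gen X" "b \<in> ideal_gen X" for a b
  proof -
    obtain F1 c1 F2 c2 where F1: "finite F1" "F1 \<subseteq> X" "a = (\<Sum>g\<in>F1. c1 g * g)"
      and F2: "finite F2" "F2 \<subseteq> X" "b = (\<Sum>g\<in>F2. c2 g * g)"
      using ab unfolding ideal_gen_def by auto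
    define c where "c g = (if g \<in> F1 then c1 g else 0) + (if g \<in> F2 then c2 g else 0)" for g
    have "(\<Sum>g\<in>F1 \<union> F2. c g * g) =
        (\<Sum>g\<in>F1 \<union> F2. (if g \<in> F1 then c1 g else 0) * g) +
        (\<Sum>g\<in>F1 \<union> F2. (if g \<in> F2 then c2 g else 0) * g)"
      unfolding c_def distrib_right sum.distrib ..
    also have "\<dots> = a + b"
      using F1 F2 by (simp add: extend)
    finally have "a + b = (\<Sum>g\<in>F1 \<union> F2. c g * g)" ..
    then show ?thesis
      using F1 F2 unfolding ideal_gen_def by (intro CollectI exI[of _ "F1 \<union> F2"] exI[of _ c]) simp
  qed
  moreover have "s * a \<in> ideal_gen X" if a: "a \<in> ideal_gen X" for s a
  proof -
    obtain F c where "finite F" "F \<subseteq> X" "a = (\<Sum>g\<in>F. c g * g)"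
      using a unfolding ideal_gen_def by auto
    moreover have "s * a = (\<Sum>g\<in>F. (s * c g) * g)"
      using \<open>a = _\<close> by (simp add: sum_distrib_left mult.assoc)
    ultimately show ?thesis
      unfolding ideal_gen_def by (intro CollectI exI[of _ F] exI[of _ "\<lambda>g. s * c g"]) simp
  qed
  moreover have "0 \<in> ideal_gen X"
    unfolding ideal_gen_def by (intro CollectI exI[of _ "{}"]) simp
  ultimately show ?thesis
    unfolding is_ideal_def by blast
qed

lemma ideal_gen_superset: "X \<subseteq> ideal_gen X"
proof
  fix a assume "a \<in> X"
  then show "a \<in> ideal_gen X"
    unfolding ideal_gen_def by (intro CollectI exI[of _ "{a}"] exI[of _ "\<lambda>_. 1"]) auto
qed

lemma ideal_gen_least: "is_ideal J \<Longrightarrow> X \<subseteq> J \<Longrightarrow> ideal_gen X \<subseteq> J"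
  unfolding ideal_gen_def by (auto intro!: is_ideal_sum is_ideal_mult_left)

lemma ideal_gen_mult:
  assumes J: "is_ideal J" and a: "a \<in> ideal_gen X" and b: "b \<in> ideal_gen Y"
    and XY: "\<And>x y. x \<in> X \<Longrightarrow> y \<in> Y \<Longrightarrow> x * y \<in> J"
  shows "a * b \<in> J"
proof -
  obtain F c where F: "finite F" "F \<subseteq> X" "a = (\<Sum>g\<in>F. c g * g)"
    using a unfolding ideal_gen_def by auto
  obtain G d where G: "finite G" "G \<subseteq> Y" "b = (\<Sum>h\<in>G. d h * h)"
    using b unfolding ideal_gen_def by auto
  have "a * b = (\<Sum>g\<in>F. \<Sum>h\<in>G. (c g * d h) * (g * h))"
    unfolding F(3) G(3) sum_product by (simp add: ac_simps)
  also have "\<dots> \<in> J"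
    using F G by (intro is_ideal_sum[OF J] is_ideal_mult_left[OF J, of "_ * _"] XY) auto
  finally show ?thesis .
qed

lemma is_ideal_ideal_pow: "is_ideal (ideal_pow J n)"
  unfolding ideal_pow_def by (rule is_ideal_ideal_gen)

lemma prod_list_in_ideal_pow: "length l = n \<Longrightarrow> set l \<subseteq> J \<Longrightarrow> prod_list l \<in> ideal_pow J n"
  unfolding ideal_pow_def by (rule subsetD[OF ideal_gen_superset]) blast

lemma ideal_pow_mult: "a \<in> ideal_pow J m \<Longrightarrow> b \<in> ideal_pow J n \<Longrightarrow> a * b \<in> ideal_pow J (m + n)"
  unfolding ideal_pow_def[of J m] ideal_pow_def[of J n]
  by (rule ideal_gen_mult[OF is_ideal_ideal_pow])
    (auto intro!: prod_list_in_ideal_pow[of "_ @ _", simplified])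

lemma ideal_pow_0: "ideal_pow J 0 = UNIV"
  using prod_list_in_ideal_pow[of "[]" 0 J] is_ideal_UNIV_if_one[OF is_ideal_ideal_pow] by auto

lemma power_in_ideal_pow: "a \<in> J \<Longrightarrow> a ^ n \<in> ideal_pow J n"
  using prod_list_in_ideal_pow[of "replicate n a" n J] by (simp add: prod_list_replicate set_replicate_conv_if)

lemma ideal_pow_antimono: "m \<le> n \<Longrightarrow> ideal_pow J n \<subseteq> ideal_pow J m"
  unfolding ideal_pow_def[of J n]
proof (rule ideal_gen_least[OF is_ideal_ideal_pow], rule subsetI)
  fix y assume "m \<le> n" "y \<in> {prod_list l |l. length l = n \<and> set l \<subseteq> J}"
  then obtain l where l: "y = prod_list l" "length l = n" "set l \<subseteq> J"
    by blast
  have "prod_list (take m l) \<in> ideal_pow J m"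
    using l \<open>m \<le> n\<close>
    by (intro prod_list_in_ideal_pow) (auto dest: in_set_takeD)
  moreover have "prod_list (take m l) dvd prod_list l"
    by (metis append_take_drop_id dvd_triv_left prod_list.append)
  ultimately show "y \<in> ideal_pow J m"
    unfolding l(1) by (rule is_ideal_dvd[OF is_ideal_ideal_pow])
qed

lemma prod_list_in_ideal_gen_products:
  "set l \<subseteq> ideal_gen G \<Longrightarrow>
   prod_list l \<in> ideal_gen {prod_list l' | l'. length l' = length l \<and> set l' \<subseteq> G}"
proof (induction l)
  case Nil
  then show ?case
    using ideal_gen_superset by fastforce
next
  case (Cons a l)
  let ?P = "\<lambda>n. ideal_gen {prod_list l' | l'. length l' = n \<and> set l' \<subseteq> G}"
  have "a * prod_list l \<in> ?P (Suc (length l))"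
  proof (rule ideal_gen_mult[OF is_ideal_ideal_gen])
    show "a \<in> ideal_gen G" "prod_list l \<in> ?P (length l)"
      using Cons by auto
  next
    fix g y assume "g \<in> G" "y \<in> {prod_list l' | l'. length l' = length l \<and> set l' \<subseteq> G}"
    then obtain l' where "y = prod_list l'" "length l' = length l" "set l' \<subseteq> G"
      by blast
    with \<open>g \<in> G\<close> show "g * y \<in> ?P (Suc (length l))"
      by (intro subsetD[OF ideal_gen_superset] CollectI exI[of _ "g # l'"]) simp
  qed
  then show ?case by simp
qed

lemma ideal_pow_ideal_gen_subset:
  "ideal_pow (ideal_gen G) n \<subseteq> ideal_gen {prod_list l | l. length l = n \<and> set l \<subseteq> G}"
  unfolding ideal_pow_def[of "ideal_gen G"]
  by (rule ideal_gen_least[OF is_ideal_ideal_gen]) (auto dest: prod_list_in_ideal_gen_products)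

lemma power_dvd_prod_list: "(g::'a::comm_monoid_mult) ^ count_list l g dvd prod_list l"
  by (induction l) (auto simp: mult_dvd_mono)

text \<open>By pigeonhole, a product of \<open>card G * K + 1\<close> generators contains some \<open>g ^ K\<close>.\<close>

lemma ideal_pow_subset_if_powers_mem:
  assumes G: "finite G" and Q: "is_ideal Q" and pow: "\<And>g. g \<in> G \<Longrightarrow> \<exists>k. g ^ k \<in> Q"
  shows "\<exists>n. ideal_pow (ideal_gen G) n \<subseteq> Q"
proof -
  obtain k where k: "\<And>g. g \<in> G \<Longrightarrow> g ^ k g \<in> Q"
    using pow by metis
  define K where "K = (\<Sum>g\<in>G. k g)"
  have gK: "g ^ K \<in> Q" if "g \<in> G" for g
    using is_ideal_dvd[OF Q k[OF that]] member_le_sum[OF that, of k] G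
    by (simp add: K_def le_imp_power_dvd)
  have "ideal_gen {prod_list l | l. length l = card G * K + 1 \<and> set l \<subseteq> G} \<subseteq> Q"
  proof (rule ideal_gen_least[OF Q], rule subsetI)
    fix y assume "y \<in> {prod_list l | l. length l = card G * K + 1 \<and> set l \<subseteq> G}"
    then obtain l where l: "y = prod_list l" "length l = card G * K + 1" "set l \<subseteq> G"
      by blast
    have "\<exists>g\<in>G. K \<le> count_list l g"
    proof (rule ccontr)
      assume "\<not> ?thesis"
      then have "sum (count_list l) G \<le> sum (\<lambda>_. K) G"
        by (intro sum_mono) (force simp: not_le)
      then show False
        using sum_count_set[OF l(3) G] l(2) by simp
    qed
    then obtain g where g: "g \<in> G" "K \<le> count_list l g"
      by blast
    have "g ^ K dvd prod_list l"
      using le_imp_power_dvd[OF g(2)] power_dvd_prod_list dvd_trans by blast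
    then show "y \<in> Q"
      unfolding l(1) by (rule is_ideal_dvd[OF Q gK[OF g(1)]])
  qed
  then show ?thesis
    using ideal_pow_ideal_gen_subset[of G "card G * K + 1"] by blast
qed

section \<open>Noetherian rings and Krull's intersection theorem\<close>

lemma noetherian_ideal_finitely_generated:
  assumes "noetherian_ring TYPE('a::comm_ring_1)" and "is_ideal (J :: 'a set)"
  obtains X where "finite X" "J = ideal_gen X"
  using assms by (meson noetherian_ring_def)

lemma noetherian_chain_stabilizes:
  assumes noeth: "noetherian_ring TYPE('a::comm_ring_1)"
    and C: "mono (C :: nat \<Rightarrow> 'a set)" "\<And>n. is_ideal (C n)"
  shows "\<exists>N. \<forall>n\<ge>N. C n = C N"
proof -
  have "is_ideal (\<Union>(range C))"
    unfolding is_ideal_def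
  proof (intro conjI ballI allI)
    show "0 \<in> \<Union>(range C)"
      using is_ideal_zero[OF C(2)] by blast
  next
    fix a b assume "a \<in> \<Union>(range C)" "b \<in> \<Union>(range C)"
    then obtain m n where "a \<in> C m" "b \<in> C n"
      by blast
    then have "a \<in> C (m + n)" "b \<in> C (m + n)"
      using monoD[OF C(1), of m "m + n"] monoD[OF C(1), of n "m + n"] by auto
    then show "a + b \<in> \<Union>(range C)"
      using is_ideal_add[OF C(2)] by blast
  next
    fix s a assume "a \<in> \<Union>(range C)"
    then show "s * a \<in> \<Union>(range C)"
      using is_ideal_mult_left[OF C(2)] by blast
  qed
  then obtain X where X: "finite X" "\<Union>(range C) = ideal_gen X"
    by (rule noetherian_ideal_finitely_generated[OF noeth])
  have "C m \<subseteq> C n \<or> C n \<subseteq> C m" for m n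
    using nat_le_linear[of m n] monoD[OF C(1), of m n] monoD[OF C(1), of n m] by blast
  then have "subset.chain UNIV (range C)"
    unfolding subset_chain_def by blast
  moreover have "X \<subseteq> \<Union>(range C)"
    using X(2) ideal_gen_superset[of X] by simp
  ultimately obtain N where "X \<subseteq> C N"
    using finite_subset_Union_chain[OF X(1), of "range C" UNIV] by blast
  then have "ideal_gen X \<subseteq> C N"
    by (rule ideal_gen_least[OF C(2)])
  then have "C n = C N" if "N \<le> n" for n
    using X(2) monoD[OF C(1) that] by blast
  then show ?thesis
    by blast
qed

lemma noetherian_maximal_element:
  assumes noeth: "noetherian_ring TYPE('a::comm_ring_1)"
    and "F \<noteq> {}" and ideals: "\<And>A. A \<in> F \<Longrightarrow> is_ideal (A :: 'a set)"
  shows "\<exists>Q\<in>F. \<forall>B\<in>F. Q \<subseteq> B \<longrightarrow> B = Q"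
proof (rule ccontr)
  assume "\<not> ?thesis"
  then obtain next_ideal where next_ideal: "\<And>A. A \<in> F \<Longrightarrow> next_ideal A \<in> F \<and> A \<subset> next_ideal A"
    by (metis psubsetI)
  obtain A0 where "A0 \<in> F"
    using \<open>F \<noteq> {}\<close> by blast
  define C where "C n = (next_ideal ^^ n) A0" for n
  have CF: "C n \<in> F" for n
    by (induction n) (simp_all add: C_def \<open>A0 \<in> F\<close> next_ideal)
  have C_strict: "C n \<subset> C (Suc n)" for n
    using next_ideal[OF CF[of n]] by (simp add: C_def)
  then have "mono C"
    by (simp add: mono_iff_le_Suc less_imp_le)
  then obtain N where "\<forall>n\<ge>N. C n = C N"
    using noetherian_chain_stabilizes[of C, OF noeth _ ideals[OF CF]] by blast
  then show False
    using C_strict[of N] by (metis le_SucI order_refl order_less_irrefl)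
qed

definition colon :: "'a::comm_ring_1 set \<Rightarrow> 'a \<Rightarrow> 'a set" where
  "colon Q y = {a. a * y \<in> Q}"

lemma is_ideal_colon: "is_ideal Q \<Longrightarrow> is_ideal (colon Q y)"
  unfolding colon_def is_ideal_def by (auto simp: distrib_right mult.assoc)

lemma is_ideal_adjoin:
  assumes Q: "is_ideal Q"
  shows "is_ideal {q + a * s | q s. q \<in> Q}" (is "is_ideal ?B")
proof -
  have "0 = 0 + a * 0" "0 \<in> Q"
    using is_ideal_zero[OF Q] by simp_all
  then have "0 \<in> ?B"
    by blast
  moreover have "b + c \<in> ?B" if bc: "b \<in> ?B" "c \<in> ?B" for b c
  proof -
    obtain q s q' s' where "q \<in> Q" "q' \<in> Q" "b = q + a * s" "c = q' + a * s'"
      using bc by blast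
    then have "b + c = (q + q') + a * (s + s')" "q + q' \<in> Q"
      by (simp_all add: algebra_simps is_ideal_add[OF Q])
    then show ?thesis
      by blast
  qed
  moreover have "t * b \<in> ?B" if b: "b \<in> ?B" for t b
  proof -
    obtain q s where "q \<in> Q" "b = q + a * s"
      using b by blast
    then have "t * b = t * q + a * (t * s)" "t * q \<in> Q"
      using is_ideal_mult_left[OF Q] by (simp_all add: algebra_simps)
    then show ?thesis
      by blast
  qed
  ultimately show ?thesis
    unfolding is_ideal_def by (intro conjI ballI allI) simp_all
qed

text \<open>In the next three lemmas the hypothesis \<open>avoid\<close> says that \<open>Q\<close> is maximal among the
  ideals not containing \<open>y\<close>.\<close>

lemma avoiding_ideal_generates:
  assumes Q: "is_ideal Q" and avoid: "\<And>B. is_ideal B \<Longrightarrow> Q \<subset> B \<Longrightarrow> y \<in> B" and "a \<notin> Q"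
  shows "\<exists>q\<in>Q. \<exists>s. y = q + a * s"
proof -
  have "Q \<subset> {q + a * s | q s. q \<in> Q}"
  proof
    have "q = q + a * 0" for q
      by simp
    then show "Q \<subseteq> {q + a * s | q s. q \<in> Q}"
      by blast
    have "a \<in> {q + a * s | q s. q \<in> Q}"
      using is_ideal_zero[OF Q] by (intro CollectI exI[of _ 0] exI[of _ 1]) simp
    then show "Q \<noteq> {q + a * s | q s. q \<in> Q}"
      using \<open>a \<notin> Q\<close> by blast
  qed
  then show ?thesis
    using avoid[OF is_ideal_adjoin[OF Q]] by blast
qed

lemma avoiding_ideal_colon_maximal:
  assumes Q: "is_ideal Q" and avoid: "\<And>B. is_ideal B \<Longrightarrow> Q \<subset> B \<Longrightarrow> y \<in> B" and "y \<notin> Q"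
  shows "maximal_ideal (colon Q y)"
  unfolding maximal_ideal_def
proof (intro conjI allI impI)
  show "is_ideal (colon Q y)"
    by (rule is_ideal_colon[OF Q])
  show "colon Q y \<noteq> UNIV"
    using \<open>y \<notin> Q\<close> unfolding colon_def by (metis (mono_tags) UNIV_I mem_Collect_eq mult_1)
next
  fix K assume K: "is_ideal K \<and> colon Q y \<subseteq> K"
  show "K = colon Q y \<or> K = UNIV"
  proof (cases "K \<subseteq> colon Q y")
    case False
    then obtain a where "a \<in> K" "a * y \<notin> Q"
      by (auto simp: colon_def)
    then obtain q s where "q \<in> Q" and y: "y = q + (a * y) * s"
      using avoiding_ideal_generates[OF Q avoid] by blast
    have "(1 - a * s) * y = y - (a * y) * s"
      by (simp add: algebra_simps)
    also have "\<dots> = q"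
      unfolding diff_eq_eq by (rule y)
    finally have "(1 - a * s) * y \<in> Q"
      using \<open>q \<in> Q\<close> by simp
    then have "1 - a * s \<in> K"
      using K by (auto simp: colon_def)
    moreover have "a * s \<in> K"
      using K \<open>a \<in> K\<close> is_ideal_mult_right by blast
    ultimately have "1 \<in> K"
      using is_ideal_add[of K "1 - a * s" "a * s"] K by simp
    then show ?thesis
      using is_ideal_UNIV_if_one K by blast
  qed (use K in blast)
qed

lemma avoiding_ideal_contains_power:
  assumes noeth: "noetherian_ring TYPE('a::comm_ring_1)"
    and Q: "is_ideal (Q :: 'a set)" and avoid: "\<And>B. is_ideal B \<Longrightarrow> Q \<subset> B \<Longrightarrow> y \<in> B"
    and "y \<notin> Q" and g: "g \<in> colon Q y"
  shows "\<exists>k. g ^ k \<in> Q"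
proof (rule ccontr)
  assume no_power: "\<not> ?thesis"
  have "colon Q (g ^ k) \<subseteq> colon Q (g ^ Suc k)" for k
  proof
    fix a assume "a \<in> colon Q (g ^ k)"
    then have "g * (a * g ^ k) \<in> Q"
      using is_ideal_mult_left[OF Q] by (simp add: colon_def)
    then show "a \<in> colon Q (g ^ Suc k)"
      by (simp add: colon_def ac_simps)
  qed
  then have "mono (\<lambda>k. colon Q (g ^ k))"
    by (simp add: mono_iff_le_Suc)
  then obtain N where N: "\<And>n. n \<ge> N \<Longrightarrow> colon Q (g ^ n) = colon Q (g ^ N)"
    using noetherian_chain_stabilizes[of "\<lambda>k. colon Q (g ^ k)", OF noeth _ is_ideal_colon[OF Q]]
    by blast
  define k where "k = Suc N"
  obtain q s where "q \<in> Q" and y: "y = q + g ^ k * s"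
    using avoiding_ideal_generates[OF Q avoid] no_power by blast
  have "g ^ k * y \<in> Q"
    using is_ideal_mult_left[OF Q, of "g * y" "g ^ N"] g by (simp add: colon_def k_def ac_simps)
  then have "g ^ k * y - g ^ k * q \<in> Q"
    using is_ideal_diff[OF Q _ is_ideal_mult_left[OF Q \<open>q \<in> Q\<close>]] by blast
  moreover have "g ^ k * y - g ^ k * q = g ^ (k + k) * s"
    by (simp add: y algebra_simps power_add)
  ultimately have "g ^ (k + k) * s \<in> Q"
    by simp
  then have "s \<in> colon Q (g ^ (k + k))"
    by (simp add: colon_def mult.commute)
  moreover have "colon Q (g ^ (k + k)) = colon Q (g ^ k)"
    using N[of "k + k"] N[of k] by (simp add: k_def)
  ultimately have "s \<in> colon Q (g ^ k)"
    by simp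
  then have "y \<in> Q"
    using is_ideal_add[OF Q \<open>q \<in> Q\<close>] by (simp add: colon_def y mult.commute)
  with \<open>y \<notin> Q\<close> show False ..
qed

text \<open>An ideal
  \<open>Q \<supseteq> J\<close> maximal among those avoiding \<open>y\<close> has colon ideal \<open>M\<close>, hence contains a power
  of \<open>M\<close>.\<close>

theorem krull_ideal_closed:
  fixes M J :: "'a::comm_ring_1 set"
  assumes noeth: "noetherian_ring TYPE('a)" and loc: "local_ring TYPE('a)"
    and M: "maximal_ideal M" and J: "is_ideal J"
    and approx: "\<And>n. \<exists>j\<in>J. y - j \<in> ideal_pow M n"
  shows "y \<in> J"
proof (rule ccontr)
  assume "y \<notin> J"
  obtain Q where "Q \<in> {Q. is_ideal Q \<and> J \<subseteq> Q \<and> y \<notin> Q}"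
    and Q_max: "\<forall>B\<in>{Q. is_ideal Q \<and> J \<subseteq> Q \<and> y \<notin> Q}. Q \<subseteq> B \<longrightarrow> B = Q"
    using noetherian_maximal_element[OF noeth, of "{Q. is_ideal Q \<and> J \<subseteq> Q \<and> y \<notin> Q}"] J \<open>y \<notin> J\<close>
    by blast
  then have Q: "is_ideal Q" "J \<subseteq> Q" "y \<notin> Q"
    by auto
  have avoid: "y \<in> B" if "is_ideal B" "Q \<subset> B" for B
    using Q_max that Q(2) by blast
  have "colon Q y = M"
    using avoiding_ideal_colon_maximal[OF Q(1) avoid Q(3)] M loc
    unfolding local_ring_def by blast
  have "is_ideal M"
    using M by (simp add: maximal_ideal_def)
  then obtain G where G: "finite G" "M = ideal_gen G"
    by (rule noetherian_ideal_finitely_generated[OF noeth])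
  then obtain n where "ideal_pow M n \<subseteq> Q"
    using ideal_pow_subset_if_powers_mem[OF G(1) Q(1)] ideal_gen_superset[of G]
      avoiding_ideal_contains_power[OF noeth Q(1) avoid Q(3)] \<open>colon Q y = M\<close> by blast
  moreover obtain j where "j \<in> J" "y - j \<in> ideal_pow M n"
    using approx by blast
  ultimately have "j + (y - j) \<in> Q"
    using Q is_ideal_add by blast
  with Q(3) show False
    by simp
qed

section \<open>Truncating and gluing expansions\<close>

definition expansion_sum ::
  "nat \<Rightarrow> (nat \<Rightarrow> 'a::comm_ring_1) \<Rightarrow> (nat \<Rightarrow> nat) set \<Rightarrow> ((nat \<Rightarrow> nat) \<Rightarrow> 'a) \<Rightarrow> nat \<Rightarrow> nat \<Rightarrow> 'a"
  where "expansion_sum r x \<Gamma> c a b = (\<Sum>k\<in>{a..<b}. \<Sum>u\<in>deg_part r \<Gamma> k. c u * meval r x u)"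

definition coeffs_lifted ::
  "nat \<Rightarrow> (nat \<Rightarrow> nat) set \<Rightarrow> ('a \<Rightarrow> 'a) \<Rightarrow> nat \<Rightarrow> enat \<Rightarrow> ((nat \<Rightarrow> nat) \<Rightarrow> 'a) \<Rightarrow> bool"
  where "coeffs_lifted r \<Gamma> \<sigma> i j c \<longleftrightarrow> (\<forall>u\<in>\<Gamma>. i \<le> mdeg r u \<and> enat (mdeg r u) < j \<longrightarrow> c u \<in> range \<sigma>)"

definition coeffs_agree ::
  "nat \<Rightarrow> (nat \<Rightarrow> nat) set \<Rightarrow> nat \<Rightarrow> enat \<Rightarrow> ((nat \<Rightarrow> nat) \<Rightarrow> 'a) \<Rightarrow> ((nat \<Rightarrow> nat) \<Rightarrow> 'a) \<Rightarrow> bool"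
  where "coeffs_agree r \<Gamma> i j c c' \<longleftrightarrow> (\<forall>u\<in>\<Gamma>. i \<le> mdeg r u \<and> enat (mdeg r u) < j \<longrightarrow> c' u = c u)"

definition adic_null :: "'a::comm_ring_1 set \<Rightarrow> (nat \<Rightarrow> 'a) \<Rightarrow> bool"
  where "adic_null M s \<longleftrightarrow> (\<forall>n. \<exists>N. \<forall>K\<ge>N. s K \<in> ideal_pow M n)"

text \<open>\<open>R b\<close> is the remainder after the terms of degree \<open>< b\<close>; the shift by \<open>Suc\<close> matches
  the closed ranges \<open>{i..K}\<close> of \<^const>\<open>rep_inf\<close>.\<close>

definition negligible_at :: "'a::comm_ring_1 set \<Rightarrow> 'a set \<Rightarrow> enat \<Rightarrow> (nat \<Rightarrow> 'a) \<Rightarrow> bool"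
  where "negligible_at M I j R \<longleftrightarrow>
    (case j of enat j' \<Rightarrow> R j' \<in> ideal_pow I j' | \<infinity> \<Rightarrow> adic_null M (\<lambda>K. R (Suc K)))"

definition is_expansion ::
  "'a::comm_ring_1 set \<Rightarrow> nat \<Rightarrow> (nat \<Rightarrow> 'a) \<Rightarrow> (nat \<Rightarrow> nat) set \<Rightarrow> nat \<Rightarrow> enat \<Rightarrow> ('a \<Rightarrow> 'a)
    \<Rightarrow> 'a \<Rightarrow> ((nat \<Rightarrow> nat) \<Rightarrow> 'a) \<Rightarrow> bool"
  where "is_expansion M r x \<Gamma> i j \<sigma> f c \<longleftrightarrow> coeffs_lifted r \<Gamma> \<sigma> i j c \<and>
    negligible_at M (gen_ideal r x) j (\<lambda>b. f - expansion_sum r x \<Gamma> c i b)"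

lemma expandable_iff:
  "expandable M r x \<Gamma> i j \<longleftrightarrow>
    (\<forall>\<sigma>. lifting (gen_ideal r x) \<sigma> \<longrightarrow> (\<forall>f\<in>ideal_pow (gen_ideal r x) i.
      \<exists>c. is_expansion M r x \<Gamma> i j \<sigma> f c \<and>
        (\<forall>c'. is_expansion M r x \<Gamma> i j \<sigma> f c' \<longrightarrow> coeffs_agree r \<Gamma> i j c c')))"
  by (cases j) (simp_all add: expandable_def is_expansion_def coeffs_lifted_def coeffs_agree_def
      negligible_at_def adic_null_def rep_fin_def rep_inf_def expansion_sum_def
      atLeastLessThanSuc_atLeastAtMost)

lemma expansion_sum_split:
  "a \<le> b \<Longrightarrow> b \<le> d \<Longrightarrow> expansion_sum r x \<Gamma> c a b + expansion_sum r x \<Gamma> c b d = expansion_sum r x \<Gamma> c a d"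
  unfolding expansion_sum_def by (rule sum.atLeastLessThan_concat)

lemma expansion_sum_cong:
  "(\<And>u. u \<in> \<Gamma> \<Longrightarrow> a \<le> mdeg r u \<Longrightarrow> mdeg r u < b \<Longrightarrow> c u = d u) \<Longrightarrow>
    expansion_sum r x \<Gamma> c a b = expansion_sum r x \<Gamma> d a b"
  unfolding expansion_sum_def by (intro sum.cong refl) (auto simp: deg_part_def)

lemma expansion_sum_zero [simp]: "expansion_sum r x \<Gamma> (\<lambda>_. 0) a b = 0"
  by (simp add: expansion_sum_def)

lemma prod_power_in_ideal_pow:
  "finite A \<Longrightarrow> (\<And>i. i \<in> A \<Longrightarrow> x i \<in> J) \<Longrightarrow> (\<Prod>i\<in>A. x i ^ u i) \<in> ideal_pow J (\<Sum>i\<in>A. u i)"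
  by (induction A rule: finite_induct) (auto simp: ideal_pow_0 intro: ideal_pow_mult power_in_ideal_pow)

lemma meval_in_ideal_pow: "meval r x u \<in> ideal_pow (gen_ideal r x) (mdeg r u)"
  unfolding meval_def mdeg_def gen_ideal_def
  by (rule prod_power_in_ideal_pow) (auto intro: subsetD[OF ideal_gen_superset])

lemma expansion_sum_in_ideal_pow: "expansion_sum r x \<Gamma> c a b \<in> ideal_pow (gen_ideal r x) a"
  unfolding expansion_sum_def
proof (intro is_ideal_sum[OF is_ideal_ideal_pow])
  fix k u assume "k \<in> {a..<b}" "u \<in> deg_part r \<Gamma> k"
  then have "a \<le> mdeg r u"
    by (simp add: deg_part_def)
  then have "meval r x u \<in> ideal_pow (gen_ideal r x) a"
    using meval_in_ideal_pow[of r x u] ideal_pow_antimono by blast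
  then show "c u * meval r x u \<in> ideal_pow (gen_ideal r x) a"
    by (rule is_ideal_mult_left[OF is_ideal_ideal_pow])
qed

lemma negligible_at_cong:
  assumes "enat m \<le> j" and "\<And>b. m \<le> b \<Longrightarrow> R b = R' b" and "negligible_at M I j R"
  shows "negligible_at M I j R'"
proof (cases j)
  case (enat j')
  then show ?thesis
    using assms by (simp add: negligible_at_def)
next
  case infinity
  have "\<exists>N. \<forall>K\<ge>N. R' (Suc K) \<in> ideal_pow M n" for n
  proof -
    obtain N where N: "\<forall>K\<ge>N. R (Suc K) \<in> ideal_pow M n"
      using assms(3) infinity by (auto simp: negligible_at_def adic_null_def)
    have "R' (Suc K) \<in> ideal_pow M n" if "max N m \<le> K" for K
      using N assms(2)[of "Suc K"] that by auto
    then show ?thesis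
      by blast
  qed
  then show ?thesis
    using infinity by (simp add: negligible_at_def adic_null_def)
qed

lemma negligible_at_imp_mem:
  fixes M I :: "'a::comm_ring_1 set"
  assumes noeth: "noetherian_ring TYPE('a)" and loc: "local_ring TYPE('a)" and M: "maximal_ideal M"
    and "enat m \<le> j" and R: "negligible_at M I j R"
    and tail: "\<And>b. m \<le> b \<Longrightarrow> R m - R b \<in> ideal_pow I m"
  shows "R m \<in> ideal_pow I m"
proof (cases j)
  case (enat j')
  then have "R m - R j' \<in> ideal_pow I m" "R j' \<in> ideal_pow I m"
    using assms(4) R tail ideal_pow_antimono[of m j' I] by (auto simp: negligible_at_def)
  then show ?thesis
    using is_ideal_add[OF is_ideal_ideal_pow] by fastforce
next
  case infinity
  show ?thesis
  proof (rule krull_ideal_closed[OF noeth loc M is_ideal_ideal_pow])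
    fix n
    obtain N where "\<forall>K\<ge>N. R (Suc K) \<in> ideal_pow M n"
      using R infinity by (auto simp: negligible_at_def adic_null_def)
    then have "R m - (R m - R (Suc (max N m))) \<in> ideal_pow M n"
      by simp
    moreover have "R m - R (Suc (max N m)) \<in> ideal_pow I m"
      by (rule tail) simp
    ultimately show "\<exists>j\<in>ideal_pow I m. R m - j \<in> ideal_pow M n"
      by blast
  qed
qed

lemma is_expansion_truncate:
  fixes M :: "'a::comm_ring_1 set"
  assumes noeth: "noetherian_ring TYPE('a)" and loc: "local_ring TYPE('a)" and M: "maximal_ideal M"
    and "i1 \<le> i2" and "enat i2 \<le> j" and c: "is_expansion M r x \<Gamma> i1 j \<sigma> f c"
  shows "is_expansion M r x \<Gamma> i1 (enat i2) \<sigma> f c"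
proof -
  let ?R = "\<lambda>b. f - expansion_sum r x \<Gamma> c i1 b"
  have "?R i2 - ?R b \<in> ideal_pow (gen_ideal r x) i2" if "i2 \<le> b" for b
    using expansion_sum_split[OF \<open>i1 \<le> i2\<close> that, of r x \<Gamma> c, symmetric]
      expansion_sum_in_ideal_pow[of r x \<Gamma> c i2 b]
    by simp
  moreover have "negligible_at M (gen_ideal r x) j ?R"
    using c by (simp add: is_expansion_def)
  ultimately have "?R i2 \<in> ideal_pow (gen_ideal r x) i2"
    using negligible_at_imp_mem[OF noeth loc M \<open>enat i2 \<le> j\<close>] by blast
  moreover have "coeffs_lifted r \<Gamma> \<sigma> i1 (enat i2) c"
    using c order_less_le_trans[OF _ \<open>enat i2 \<le> j\<close>] by (auto simp: is_expansion_def coeffs_lifted_def)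
  ultimately show ?thesis
    by (simp add: is_expansion_def negligible_at_def)
qed

lemma is_expansion_tail:
  assumes "i1 \<le> i2" and "enat i2 \<le> j" and c: "is_expansion M r x \<Gamma> i1 j \<sigma> f c"
  shows "is_expansion M r x \<Gamma> i2 j \<sigma> (f - expansion_sum r x \<Gamma> c i1 i2) c"
proof -
  have "f - expansion_sum r x \<Gamma> c i1 b =
      f - expansion_sum r x \<Gamma> c i1 i2 - expansion_sum r x \<Gamma> c i2 b" if "i2 \<le> b" for b
    using expansion_sum_split[OF \<open>i1 \<le> i2\<close> that, of r x \<Gamma> c] by (simp add: algebra_simps)
  moreover have "negligible_at M (gen_ideal r x) j (\<lambda>b. f - expansion_sum r x \<Gamma> c i1 b)"
    using c by (simp add: is_expansion_def)
  ultimately have "negligible_at M (gen_ideal r x) j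
      (\<lambda>b. f - expansion_sum r x \<Gamma> c i1 i2 - expansion_sum r x \<Gamma> c i2 b)"
    by (rule negligible_at_cong[OF \<open>enat i2 \<le> j\<close>])
  moreover have "coeffs_lifted r \<Gamma> \<sigma> i2 j c"
    using c \<open>i1 \<le> i2\<close> by (auto simp: is_expansion_def coeffs_lifted_def)
  ultimately show ?thesis
    by (simp add: is_expansion_def)
qed

lemma is_expansion_glue:
  assumes "i1 \<le> i2" and "enat i2 \<le> j" and d: "is_expansion M r x \<Gamma> i1 (enat i2) \<sigma> f d"
    and e: "is_expansion M r x \<Gamma> i2 j \<sigma> (f - expansion_sum r x \<Gamma> d i1 i2) e"
  shows "is_expansion M r x \<Gamma> i1 j \<sigma> f (\<lambda>u. if mdeg r u < i2 then d u else e u)"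
    (is "is_expansion M r x \<Gamma> i1 j \<sigma> f ?c")
proof -
  have "expansion_sum r x \<Gamma> ?c i1 i2 = expansion_sum r x \<Gamma> d i1 i2"
    "expansion_sum r x \<Gamma> ?c i2 b = expansion_sum r x \<Gamma> e i2 b" for b
    by (auto intro: expansion_sum_cong)
  then have split: "expansion_sum r x \<Gamma> ?c i1 b = expansion_sum r x \<Gamma> d i1 i2 + expansion_sum r x \<Gamma> e i2 b"
    if "i2 \<le> b" for b
    using expansion_sum_split[OF \<open>i1 \<le> i2\<close> that, of r x \<Gamma> ?c] by simp
  have "f - expansion_sum r x \<Gamma> d i1 i2 - expansion_sum r x \<Gamma> e i2 b =
      f - expansion_sum r x \<Gamma> ?c i1 b" if "i2 \<le> b" for b
    using split[OF that] by simp
  moreover have "negligible_at M (gen_ideal r x) j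
      (\<lambda>b. f - expansion_sum r x \<Gamma> d i1 i2 - expansion_sum r x \<Gamma> e i2 b)"
    using e by (simp add: is_expansion_def)
  ultimately have "negligible_at M (gen_ideal r x) j (\<lambda>b. f - expansion_sum r x \<Gamma> ?c i1 b)"
    by (rule negligible_at_cong[OF \<open>enat i2 \<le> j\<close>])
  moreover have "coeffs_lifted r \<Gamma> \<sigma> i1 j ?c"
    using d e by (auto simp: is_expansion_def coeffs_lifted_def)
  ultimately show ?thesis
    by (simp add: is_expansion_def)
qed

lemma is_expansion_zero:
  assumes "lifting (gen_ideal r x) \<sigma>" and "f \<in> ideal_pow (gen_ideal r x) i2"
  shows "is_expansion M r x \<Gamma> i1 (enat i2) \<sigma> f (\<lambda>_. 0)"
proof -
  have "0 \<in> range \<sigma>"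
    using assms(1) rangeI[of \<sigma> 0] by (simp add: lifting_def)
  then show ?thesis
    using assms(2) by (simp add: is_expansion_def coeffs_lifted_def negligible_at_def)
qed


lemma expandableE:
  assumes "expandable M r x \<Gamma> i j" and "lifting (gen_ideal r x) \<sigma>" and "f \<in> ideal_pow (gen_ideal r x) i"
  obtains c where "is_expansion M r x \<Gamma> i j \<sigma> f c"
    and "\<And>c'. is_expansion M r x \<Gamma> i j \<sigma> f c' \<Longrightarrow> coeffs_agree r \<Gamma> i j c c'"
  using assms that unfolding expandable_iff by blast

lemma expandable_upper_part:
  fixes M :: "'a::comm_ring_1 set"
  assumes noeth: "noetherian_ring TYPE('a)" and loc: "local_ring TYPE('a)" and M: "maximal_ideal M"
    and "i1 \<le> i2" and "enat i2 \<le> j"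
    and lower: "expandable M r x \<Gamma> i1 (enat i2)" and whole: "expandable M r x \<Gamma> i1 j"
  shows "expandable M r x \<Gamma> i2 j"
  unfolding expandable_iff
proof (intro allI impI ballI)
  fix \<sigma> f assume \<sigma>: "lifting (gen_ideal r x) \<sigma>" and f: "f \<in> ideal_pow (gen_ideal r x) i2"
  then have f1: "f \<in> ideal_pow (gen_ideal r x) i1"
    using ideal_pow_antimono[OF \<open>i1 \<le> i2\<close>] by blast
  obtain c where c: "is_expansion M r x \<Gamma> i1 j \<sigma> f c"
    and c_unique: "\<And>c'. is_expansion M r x \<Gamma> i1 j \<sigma> f c' \<Longrightarrow> coeffs_agree r \<Gamma> i1 j c c'"
    by (rule expandableE[OF whole \<sigma> f1]) blast
  obtain d where d_unique: "\<And>d'. is_expansion M r x \<Gamma> i1 (enat i2) \<sigma> f d' \<Longrightarrow>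
      coeffs_agree r \<Gamma> i1 (enat i2) d d'"
    by (rule expandableE[OF lower \<sigma> f1]) blast
  have zero: "is_expansion M r x \<Gamma> i1 (enat i2) \<sigma> f (\<lambda>_. 0)"
    by (rule is_expansion_zero[OF \<sigma> f])
  have "coeffs_agree r \<Gamma> i1 (enat i2) d (\<lambda>_. 0)" "coeffs_agree r \<Gamma> i1 (enat i2) d c"
    using d_unique[OF zero] d_unique[OF is_expansion_truncate[OF noeth loc M \<open>i1 \<le> i2\<close> \<open>enat i2 \<le> j\<close> c]]
    by simp_all
  then have "expansion_sum r x \<Gamma> c i1 i2 = expansion_sum r x \<Gamma> (\<lambda>_. 0) i1 i2"
    by (intro expansion_sum_cong) (auto simp: coeffs_agree_def)
  then have c_upper: "is_expansion M r x \<Gamma> i2 j \<sigma> f c"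
    using is_expansion_tail[OF \<open>i1 \<le> i2\<close> \<open>enat i2 \<le> j\<close> c] by simp
  show "\<exists>c. is_expansion M r x \<Gamma> i2 j \<sigma> f c \<and>
      (\<forall>c'. is_expansion M r x \<Gamma> i2 j \<sigma> f c' \<longrightarrow> coeffs_agree r \<Gamma> i2 j c c')"
  proof (intro exI conjI allI impI)
    fix c' assume "is_expansion M r x \<Gamma> i2 j \<sigma> f c'"
    then have "is_expansion M r x \<Gamma> i1 j \<sigma> f (\<lambda>u. if mdeg r u < i2 then 0 else c' u)"
      using is_expansion_glue[OF \<open>i1 \<le> i2\<close> \<open>enat i2 \<le> j\<close> zero] by simp
    then have "coeffs_agree r \<Gamma> i1 j c (\<lambda>u. if mdeg r u < i2 then 0 else c' u)"
      by (rule c_unique)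
    then show "coeffs_agree r \<Gamma> i2 j c c'"
      using \<open>i1 \<le> i2\<close> by (auto simp: coeffs_agree_def)
  qed (rule c_upper)
qed

lemma expandable_concat:
  fixes M :: "'a::comm_ring_1 set"
  assumes noeth: "noetherian_ring TYPE('a)" and loc: "local_ring TYPE('a)" and M: "maximal_ideal M"
    and "i1 \<le> i2" and "enat i2 \<le> j"
    and lower: "expandable M r x \<Gamma> i1 (enat i2)" and upper: "expandable M r x \<Gamma> i2 j"
  shows "expandable M r x \<Gamma> i1 j"
  unfolding expandable_iff
proof (intro allI impI ballI)
  fix \<sigma> f assume \<sigma>: "lifting (gen_ideal r x) \<sigma>" and f: "f \<in> ideal_pow (gen_ideal r x) i1"
  obtain d where d: "is_expansion M r x \<Gamma> i1 (enat i2) \<sigma> f d"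
    and d_unique: "\<And>d'. is_expansion M r x \<Gamma> i1 (enat i2) \<sigma> f d' \<Longrightarrow> coeffs_agree r \<Gamma> i1 (enat i2) d d'"
    by (rule expandableE[OF lower \<sigma> f]) blast
  define g where "g = f - expansion_sum r x \<Gamma> d i1 i2"
  have "g \<in> ideal_pow (gen_ideal r x) i2"
    using d by (simp add: g_def is_expansion_def negligible_at_def)
  then obtain e where e: "is_expansion M r x \<Gamma> i2 j \<sigma> g e"
    and e_unique: "\<And>e'. is_expansion M r x \<Gamma> i2 j \<sigma> g e' \<Longrightarrow> coeffs_agree r \<Gamma> i2 j e e'"
    by (rule expandableE[OF upper \<sigma>]) blast
  show "\<exists>c. is_expansion M r x \<Gamma> i1 j \<sigma> f c \<and>
      (\<forall>c'. is_expansion M r x \<Gamma> i1 j \<sigma> f c' \<longrightarrow> coeffs_agree r \<Gamma> i1 j c c')"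
  proof (intro exI conjI allI impI)
    show "is_expansion M r x \<Gamma> i1 j \<sigma> f (\<lambda>u. if mdeg r u < i2 then d u else e u)"
      using is_expansion_glue[OF \<open>i1 \<le> i2\<close> \<open>enat i2 \<le> j\<close> d] e by (simp add: g_def)
  next
    fix c' assume c': "is_expansion M r x \<Gamma> i1 j \<sigma> f c'"
    have lower_agree: "coeffs_agree r \<Gamma> i1 (enat i2) d c'"
      by (rule d_unique[OF is_expansion_truncate[OF noeth loc M \<open>i1 \<le> i2\<close> \<open>enat i2 \<le> j\<close> c']])
    then have "expansion_sum r x \<Gamma> c' i1 i2 = expansion_sum r x \<Gamma> d i1 i2"
      by (intro expansion_sum_cong) (auto simp: coeffs_agree_def)
    then have "is_expansion M r x \<Gamma> i2 j \<sigma> g c'"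
      using is_expansion_tail[OF \<open>i1 \<le> i2\<close> \<open>enat i2 \<le> j\<close> c'] by (simp add: g_def)
    then have "coeffs_agree r \<Gamma> i2 j e c'"
      by (rule e_unique)
    with lower_agree show "coeffs_agree r \<Gamma> i1 j (\<lambda>u. if mdeg r u < i2 then d u else e u) c'"
      by (auto simp: coeffs_agree_def)
  qed
qed

lemma expandable_lower_part:
  fixes M :: "'a::comm_ring_1 set"
  assumes noeth: "noetherian_ring TYPE('a)" and loc: "local_ring TYPE('a)" and M: "maximal_ideal M"
    and "i1 \<le> i2" and "enat i2 \<le> j"
    and whole: "expandable M r x \<Gamma> i1 j" and upper: "expandable M r x \<Gamma> i2 j"
  shows "expandable M r x \<Gamma> i1 (enat i2)"
  unfolding expandable_iff
proof (intro allI impI ballI)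
  fix \<sigma> f assume \<sigma>: "lifting (gen_ideal r x) \<sigma>" and f: "f \<in> ideal_pow (gen_ideal r x) i1"
  obtain c where c: "is_expansion M r x \<Gamma> i1 j \<sigma> f c"
    and c_unique: "\<And>c'. is_expansion M r x \<Gamma> i1 j \<sigma> f c' \<Longrightarrow> coeffs_agree r \<Gamma> i1 j c c'"
    by (rule expandableE[OF whole \<sigma> f]) blast
  show "\<exists>c. is_expansion M r x \<Gamma> i1 (enat i2) \<sigma> f c \<and>
      (\<forall>c'. is_expansion M r x \<Gamma> i1 (enat i2) \<sigma> f c' \<longrightarrow> coeffs_agree r \<Gamma> i1 (enat i2) c c')"
  proof (intro exI conjI allI impI)
    show "is_expansion M r x \<Gamma> i1 (enat i2) \<sigma> f c"
      by (rule is_expansion_truncate[OF noeth loc M \<open>i1 \<le> i2\<close> \<open>enat i2 \<le> j\<close> c])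
  next
    fix d assume d: "is_expansion M r x \<Gamma> i1 (enat i2) \<sigma> f d"
    have "f - expansion_sum r x \<Gamma> d i1 i2 \<in> ideal_pow (gen_ideal r x) i2"
      using d by (simp add: is_expansion_def negligible_at_def)
    then obtain e where "is_expansion M r x \<Gamma> i2 j \<sigma> (f - expansion_sum r x \<Gamma> d i1 i2) e"
      by (rule expandableE[OF upper \<sigma>]) blast
    then have "coeffs_agree r \<Gamma> i1 j c (\<lambda>u. if mdeg r u < i2 then d u else e u)"
      by (rule c_unique[OF is_expansion_glue[OF \<open>i1 \<le> i2\<close> \<open>enat i2 \<le> j\<close> d]])
    moreover have "enat (mdeg r u) < j" if "mdeg r u < i2" for u
      using that order_less_le_trans[of "enat (mdeg r u)" "enat i2" j] \<open>enat i2 \<le> j\<close> by simp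
    ultimately show "coeffs_agree r \<Gamma> i1 (enat i2) c d"
      by (auto simp: coeffs_agree_def)
  qed
qed

theorem lemma3p7:
  fixes M :: "'a::comm_ring_1 set"
    and r :: nat and x :: "nat \<Rightarrow> 'a" and \<Gamma> :: "(nat \<Rightarrow> nat) set"
    and i1 i2 :: nat and i3 :: enat
  assumes noeth: "noetherian_ring TYPE('a)"
    and loc: "local_ring TYPE('a)"
    and M: "maximal_ideal M"
    and \<Gamma>: "\<Gamma> \<subseteq> monomials r"
    and i1: "0 < i1" and i12: "i1 < i2" and i23: "enat i2 < i3"
    and compl: "i3 = \<infinity> \<Longrightarrow> adic_complete M"
  shows "(expandable M r x \<Gamma> i1 (enat i2) \<and> expandable M r x \<Gamma> i1 i3 \<longrightarrow> expandable M r x \<Gamma> i2 i3)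
       \<and> (expandable M r x \<Gamma> i1 (enat i2) \<and> expandable M r x \<Gamma> i2 i3 \<longrightarrow> expandable M r x \<Gamma> i1 i3)
       \<and> (expandable M r x \<Gamma> i1 i3 \<and> expandable M r x \<Gamma> i2 i3 \<longrightarrow> expandable M r x \<Gamma> i1 (enat i2))"
proof -
  have "i1 \<le> i2" "enat i2 \<le> i3"
    using i12 i23 by simp_all
  then show ?thesis
    using expandable_upper_part[OF noeth loc M \<open>i1 \<le> i2\<close> \<open>enat i2 \<le> i3\<close>]
      expandable_concat[OF noeth loc M \<open>i1 \<le> i2\<close> \<open>enat i2 \<le> i3\<close>]
      expandable_lower_part[OF noeth loc M \<open>i1 \<le> i2\<close> \<open>enat i2 \<le> i3\<close>]
    by blast
qed

end
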